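(* Let $k\ge 2$ be an integer and $n=2k$. For every positive integer $s$, $$\alpha\big(I_{B_{2k}}^{(s(k-1))}\big)=sk.$$
   Context: Let $\mathbb{K}$ be a field. $Q_n$ is the cycle graph on vertices $1,\dots,n$ (edges $\{i,i+1\}$ for $1\le i\le n-1$ and $\{n,1\}$). $B_n$ is the simplicial complex on $\{0,\dots,n+1\}$ whose facets are $\{0,i,j\}$ and $\{n+1,i,j\}$ for each edge $\{i,j\}$ of $Q_n$ (boundary of the bipyramid over the $n$-gon), and $I_{B_n}\subset R=\mathbb{K}[x_0,\dots,x_{n+1}]$ is its Stanley-Reisner ideal, generated by $\prod_{i\in\tau}x_i$ over non-faces $\tau$. For a homogeneous ideal $I$, $I^{(m)}=R\cap\bigcap_{P\in\mathrm{Ass}(I)}I^mR_P$ and $\alpha(I)=\min\{t: I_t\ne 0\}$. *)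

theory Defs
  imports "HOL-Library.Poly_Mapping"
begin

text \<open>Polynomials in variables x_0, x_1, ... over a field 'k: finitely supported maps
  from monomials (exponent vectors nat =>0 nat) to coefficients.\<close>
type_synonym 'k mpoly = "(nat \<Rightarrow>\<^sub>0 nat) \<Rightarrow>\<^sub>0 'k"

text \<open>The ring R = K[x_0,...,x_N] as a subring (carrier) of 'k mpoly.\<close>
definition polyring :: "nat \<Rightarrow> ('k::field) mpoly set" where
  "polyring N = {p :: 'k mpoly. \<forall>m \<in> Poly_Mapping.keys p. Poly_Mapping.keys m \<subseteq> {..N}}"

definition var :: "nat \<Rightarrow> ('k::field) mpoly" where
  "var i = Poly_Mapping.single (Poly_Mapping.single i 1) 1"

definition mon_deg :: "(nat \<Rightarrow>\<^sub>0 nat) \<Rightarrow> nat" where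
  "mon_deg m = (\<Sum>i\<in>Poly_Mapping.keys m. Poly_Mapping.lookup m i)"

definition homogeneous_of :: "nat \<Rightarrow> ('k::field) mpoly \<Rightarrow> bool" where
  "homogeneous_of t f \<longleftrightarrow> (\<forall>m \<in> Poly_Mapping.keys f. mon_deg m = t)"

definition is_ideal :: "('k::field) mpoly set \<Rightarrow> 'k mpoly set \<Rightarrow> bool" where
  "is_ideal S I \<longleftrightarrow> I \<subseteq> S \<and> 0 \<in> I \<and> (\<forall>a\<in>I. \<forall>b\<in>I. a + b \<in> I)
     \<and> (\<forall>r\<in>S. \<forall>a\<in>I. r * a \<in> I)"

definition gen_ideal :: "('k::field) mpoly set \<Rightarrow> 'k mpoly set \<Rightarrow> 'k mpoly set" where
  "gen_ideal S G = \<Inter>{I. is_ideal S I \<and> G \<subseteq> I}"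

definition ideal_pow :: "('k::field) mpoly set \<Rightarrow> 'k mpoly set \<Rightarrow> nat \<Rightarrow> 'k mpoly set" where
  "ideal_pow S I m = gen_ideal S {prod_list xs | xs. length xs = m \<and> set xs \<subseteq> I}"

definition prime_ideal :: "('k::field) mpoly set \<Rightarrow> 'k mpoly set \<Rightarrow> bool" where
  "prime_ideal S P \<longleftrightarrow> is_ideal S P \<and> P \<noteq> S
     \<and> (\<forall>a\<in>S. \<forall>b\<in>S. a * b \<in> P \<longrightarrow> a \<in> P \<or> b \<in> P)"

definition colon :: "('k::field) mpoly set \<Rightarrow> 'k mpoly set \<Rightarrow> 'k mpoly \<Rightarrow> 'k mpoly set" where
  "colon S I g = {f \<in> S. f * g \<in> I}"

definition Ass :: "('k::field) mpoly set \<Rightarrow> 'k mpoly set \<Rightarrow> 'k mpoly set set" where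
  "Ass S I = {P. prime_ideal S P \<and> (\<exists>g\<in>S. P = colon S I g)}"

text \<open>Symbolic power I^(m) = R \<inter> \<Inter>_{P \<in> Ass I} I^m R_P, i.e. f in R such that for each
  associated prime P some u in R - P has u*f in I^m.\<close>
definition symbolic_power :: "('k::field) mpoly set \<Rightarrow> 'k mpoly set \<Rightarrow> nat \<Rightarrow> 'k mpoly set" where
  "symbolic_power S I m = {f \<in> S. \<forall>P \<in> Ass S I. \<exists>u \<in> S - P. u * f \<in> ideal_pow S I m}"

definition alpha :: "('k::field) mpoly set \<Rightarrow> nat" where
  "alpha I = (LEAST t. \<exists>f\<in>I. f \<noteq> 0 \<and> homogeneous_of t f)"

definition cycle_edges :: "nat \<Rightarrow> nat set set" where
  "cycle_edges n = {{i, i + 1} | i. 1 \<le> i \<and> i \<le> n - 1} \<union> {{n, 1}}"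

definition bipyr_facets :: "nat \<Rightarrow> nat set set" where
  "bipyr_facets n = {insert 0 e | e. e \<in> cycle_edges n} \<union> {insert (n + 1) e | e. e \<in> cycle_edges n}"

definition bipyr_face :: "nat \<Rightarrow> nat set \<Rightarrow> bool" where
  "bipyr_face n \<sigma> \<longleftrightarrow> (\<exists>F \<in> bipyr_facets n. \<sigma> \<subseteq> F)"

definition SR_ideal :: "nat \<Rightarrow> ('k::field) mpoly set" where
  "SR_ideal n = gen_ideal (polyring (n + 1))
     {(\<Prod>i\<in>\<tau>. var i) | \<tau>. \<tau> \<subseteq> {0..n + 1} \<and> \<not> bipyr_face n \<tau>}"

end

theory Submission imports Defs begin

text \<open>
  Everything can be read off monomials. The Stanley--Reisner ideal I of the bipyramid consists of
  the polynomials all of whose monomials have non-face support. For a facet F the monomial prime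
  P_F = (x_j : j not in F) is the colon ideal (I : x_F), and every associated prime of I lies in
  some P_F. An element u outside P_F has a monomial of P_F-degree 0, so multiplying by u does not
  change the lowest P_F-degree; as I^M lies in P_F^M, every monomial of an element of the symbolic
  power I^(M) has degree at least M outside each facet. For n = 2k the 2k facets {0, 2i+1, 2i+2}
  and {2k+1, 2i+1, 2i+2} cover every vertex at least twice, so summing these bounds gives
  2k M <= (2k - 2) deg, i.e. deg >= sk for M = s(k-1).

  Conversely, the product of x_v^s over the k odd vertices v lies in I^(s(k-1)): two odd
  vertices of the 2k-cycle are never adjacent, so x_v x_c lies in I, and every facet F contains an
  odd vertex c; multiplying by the unit x_c^(s(k-1)) at P_F turns the product into x_c^s times a
  product of s(k-1) such generators.
\<close>

section \<open>Monomials and lowest weights\<close>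

lemma keys_add_nat:
  "Poly_Mapping.keys ((a :: nat \<Rightarrow>\<^sub>0 nat) + b) = Poly_Mapping.keys a \<union> Poly_Mapping.keys b"
  by (auto simp: in_keys_iff lookup_add)

lemma poly_mapping_sum_single:
  "p = (\<Sum>m\<in>Poly_Mapping.keys p. Poly_Mapping.single m (Poly_Mapping.lookup p m))"
  by (rule poly_mapping_eqI) (simp add: lookup_sum lookup_single when_def in_keys_iff)

definition filter_keys :: "('a \<Rightarrow> bool) \<Rightarrow> ('a \<Rightarrow>\<^sub>0 'b::comm_monoid_add) \<Rightarrow> 'a \<Rightarrow>\<^sub>0 'b" where
  "filter_keys Q p =
     (\<Sum>m\<in>{m \<in> Poly_Mapping.keys p. Q m}. Poly_Mapping.single m (Poly_Mapping.lookup p m))"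

lemma lookup_filter_keys:
  "Poly_Mapping.lookup (filter_keys Q p) x = (if Q x then Poly_Mapping.lookup p x else 0)"
  by (auto simp: filter_keys_def lookup_sum lookup_single when_def in_keys_iff)

lemma keys_filter_keys: "Poly_Mapping.keys (filter_keys Q p) = {m \<in> Poly_Mapping.keys p. Q m}"
  by (auto simp: in_keys_iff lookup_filter_keys split: if_splits)

lemma filter_keys_split: "p = filter_keys Q p + filter_keys (\<lambda>m. \<not> Q m) p"
  by (rule poly_mapping_eqI) (simp add: lookup_add lookup_filter_keys)

lemma keys_mult_closed:
  assumes "\<forall>m\<in>Poly_Mapping.keys p. A m" "\<forall>m\<in>Poly_Mapping.keys q. B m"
    and "\<And>a b. A a \<Longrightarrow> B b \<Longrightarrow> C (a + b)"
  shows "\<forall>m\<in>Poly_Mapping.keys (p * q). C m"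
  using keys_mult[of p q] assms by blast

lemma keys_add_closed:
  assumes "\<forall>m\<in>Poly_Mapping.keys p. A m" "\<forall>m\<in>Poly_Mapping.keys q. A m"
  shows "\<forall>m\<in>Poly_Mapping.keys (p + q). A m"
  using keys_add[of p q] assms by blast

text \<open>The lowest-weight parts multiply to a nonzero polynomial, and nothing else reaches that weight.\<close>

lemma keys_mult_min_weight:
  fixes p q :: "('k::field) mpoly" and w :: "(nat \<Rightarrow>\<^sub>0 nat) \<Rightarrow> nat"
  assumes w_add: "\<And>x y. w (x + y) = w x + w y"
    and p_ge: "\<forall>m\<in>Poly_Mapping.keys p. a \<le> w m" and p_eq: "\<exists>m\<in>Poly_Mapping.keys p. w m = a"
    and q_ge: "\<forall>m\<in>Poly_Mapping.keys q. b \<le> w m" and q_eq: "\<exists>m\<in>Poly_Mapping.keys q. w m = b"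
  shows "\<exists>m\<in>Poly_Mapping.keys (p * q). w m = a + b"
proof -
  define p0 where "p0 = filter_keys (\<lambda>m. w m = a) p"
  define p1 where "p1 = filter_keys (\<lambda>m. w m \<noteq> a) p"
  define q0 where "q0 = filter_keys (\<lambda>m. w m = b) q"
  define q1 where "q1 = filter_keys (\<lambda>m. w m \<noteq> b) q"
  note defs = p0_def p1_def q0_def q1_def
  have p0: "\<forall>m\<in>Poly_Mapping.keys p0. w m = a" and q0: "\<forall>m\<in>Poly_Mapping.keys q0. w m = b"
    by (simp_all add: defs keys_filter_keys)
  have p1: "\<forall>m\<in>Poly_Mapping.keys p1. a < w m" and q1: "\<forall>m\<in>Poly_Mapping.keys q1. b < w m"
    using p_ge q_ge by (auto simp: defs keys_filter_keys)
  have "p0 \<noteq> 0" "q0 \<noteq> 0"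
    using p_eq q_eq by (auto simp: defs keys_filter_keys simp flip: keys_eq_empty)
  then have "p0 * q0 \<noteq> 0"
    by simp
  then obtain m where m: "m \<in> Poly_Mapping.keys (p0 * q0)"
    by (auto simp flip: keys_eq_empty)
  have wm: "w m = a + b"
    using keys_mult_closed[OF p0 q0, of "\<lambda>m. w m = a + b"] m w_add by auto
  define r where "r = p0 * q1 + p1 * q0 + p1 * q1"
  have "\<forall>m\<in>Poly_Mapping.keys (p0 * q1). a + b < w m" "\<forall>m\<in>Poly_Mapping.keys (p1 * q0). a + b < w m"
    "\<forall>m\<in>Poly_Mapping.keys (p1 * q1). a + b < w m"
    by (rule keys_mult_closed[OF p0 q1] keys_mult_closed[OF p1 q0] keys_mult_closed[OF p1 q1],
        simp add: w_add)+
  then have "\<forall>m\<in>Poly_Mapping.keys r. a + b < w m"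
    unfolding r_def by (intro keys_add_closed)
  then have "Poly_Mapping.lookup r m = 0"
    using wm by (metis in_keys_iff less_irrefl)
  moreover have "p = p0 + p1" "q = q0 + q1"
    unfolding defs by (rule filter_keys_split)+
  then have "p * q = p0 * q0 + r"
    unfolding r_def by (simp add: algebra_simps)
  ultimately have "Poly_Mapping.lookup (p * q) m \<noteq> 0"
    using m by (simp add: lookup_add in_keys_iff)
  then show ?thesis
    using wm by (auto simp: in_keys_iff)
qed

definition mon_of_set :: "nat set \<Rightarrow> nat \<Rightarrow>\<^sub>0 nat" where
  "mon_of_set \<tau> = (\<Sum>i\<in>\<tau>. Poly_Mapping.single i 1)"

lemma lookup_mon_of_set:
  "finite \<tau> \<Longrightarrow> Poly_Mapping.lookup (mon_of_set \<tau>) j = (if j \<in> \<tau> then 1 else 0)"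
  by (simp add: mon_of_set_def lookup_sum lookup_single when_def)

lemma keys_mon_of_set: "finite \<tau> \<Longrightarrow> Poly_Mapping.keys (mon_of_set \<tau>) = \<tau>"
  by (auto simp: in_keys_iff lookup_mon_of_set split: if_splits)

lemma prod_var_eq_single:
  "finite \<tau> \<Longrightarrow> (\<Prod>i\<in>\<tau>. var i) = (Poly_Mapping.single (mon_of_set \<tau>) 1 :: ('k::field) mpoly)"
  by (induction \<tau> rule: finite_induct) (simp_all add: mon_of_set_def var_def mult_single add.commute)

lemma var_power:
  "(var i :: ('k::field) mpoly) ^ e = Poly_Mapping.single (Poly_Mapping.single i e) 1"
  by (induction e) (simp_all add: var_def mult_single flip: single_add)

lemma prod_single:
  "finite A \<Longrightarrow> (\<Prod>v\<in>A. Poly_Mapping.single (h v) (1::'k::field)) = Poly_Mapping.single (\<Sum>v\<in>A. h v) 1"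
  by (induction A rule: finite_induct) (simp_all add: mult_single)

lemma mon_deg_eq_sum_atMost:
  "Poly_Mapping.keys m \<subseteq> {..N} \<Longrightarrow> mon_deg m = (\<Sum>j\<le>N. Poly_Mapping.lookup m j)"
  unfolding mon_deg_def by (intro sum.mono_neutral_left) (auto simp: in_keys_iff)

section \<open>The polynomial ring and its ideals\<close>

lemma polyring_add: "p \<in> polyring N \<Longrightarrow> q \<in> polyring N \<Longrightarrow> p + q \<in> polyring N"
  unfolding polyring_def using keys_add[of p q] by auto

lemma polyring_mult:
  assumes "p \<in> polyring N" "q \<in> polyring N"
  shows "p * q \<in> polyring N"
proof -
  have "\<forall>m\<in>Poly_Mapping.keys (p * q). Poly_Mapping.keys m \<subseteq> {..N}"
    by (rule keys_mult_closed[of p "\<lambda>m. Poly_Mapping.keys m \<subseteq> {..N}" q "\<lambda>m. Poly_Mapping.keys m \<subseteq> {..N}"])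
      (use assms in \<open>auto simp: polyring_def keys_add_nat\<close>)
  then show ?thesis
    by (simp add: polyring_def)
qed

lemma polyring_single: "Poly_Mapping.keys m \<subseteq> {..N} \<Longrightarrow> Poly_Mapping.single m c \<in> polyring N"
  unfolding polyring_def by auto

lemma polyring_single_mon_of_set:
  "finite F \<Longrightarrow> F \<subseteq> {..N} \<Longrightarrow> Poly_Mapping.single (mon_of_set F) c \<in> polyring N"
  by (simp add: polyring_single keys_mon_of_set)

lemma polyring_zero: "0 \<in> polyring N"
  unfolding polyring_def by auto

lemma polyring_one: "1 \<in> polyring N"
  unfolding polyring_def by auto

lemma polyring_var: "i \<le> N \<Longrightarrow> var i \<in> polyring N"
  unfolding var_def by (rule polyring_single) auto

lemma polyring_power: "p \<in> polyring N \<Longrightarrow> p ^ e \<in> polyring N"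
  by (induction e) (auto intro: polyring_mult polyring_one)

lemma polyring_prod: "(\<And>x. x \<in> A \<Longrightarrow> f x \<in> polyring N) \<Longrightarrow> prod f A \<in> polyring N"
  by (induction A rule: infinite_finite_induct) (auto intro: polyring_mult polyring_one)

lemma polyring_prod_list: "set xs \<subseteq> polyring N \<Longrightarrow> prod_list xs \<in> polyring N"
  by (induction xs) (auto intro: polyring_mult polyring_one)

lemma is_ideal_polyring: "is_ideal (polyring N) (polyring N)"
  unfolding is_ideal_def by (auto intro: polyring_add polyring_mult polyring_zero)

lemma ideal_mult_closed: "is_ideal S I \<Longrightarrow> r \<in> S \<Longrightarrow> a \<in> I \<Longrightarrow> r * a \<in> I"
  by (auto simp: is_ideal_def)

lemma ideal_sum_closed: "is_ideal S I \<Longrightarrow> (\<And>x. x \<in> A \<Longrightarrow> f x \<in> I) \<Longrightarrow> sum f A \<in> I"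
  by (induction A rule: infinite_finite_induct) (auto simp: is_ideal_def)

lemma gen_ideal_is_ideal:
  assumes "G \<subseteq> polyring N"
  shows "is_ideal (polyring N) (gen_ideal (polyring N) G)"
proof -
  have "polyring N \<in> {I. is_ideal (polyring N) I \<and> G \<subseteq> I}"
    using assms is_ideal_polyring by blast
  then have "gen_ideal (polyring N) G \<subseteq> polyring N"
    unfolding gen_ideal_def by (rule Inter_lower)
  then show ?thesis
    unfolding is_ideal_def by (simp add: gen_ideal_def is_ideal_def)
qed

lemma gen_ideal_generators: "G \<subseteq> gen_ideal S G"
  unfolding gen_ideal_def by blast

lemma gen_ideal_least: "is_ideal S J \<Longrightarrow> G \<subseteq> J \<Longrightarrow> gen_ideal S G \<subseteq> J"
  unfolding gen_ideal_def by blast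

lemma ideal_pow_is_ideal:
  "I \<subseteq> polyring N \<Longrightarrow> is_ideal (polyring N) (ideal_pow (polyring N) I M)"
  unfolding ideal_pow_def using polyring_prod_list by (intro gen_ideal_is_ideal) blast

lemma prod_list_mem_ideal_pow:
  "length xs = M \<Longrightarrow> set xs \<subseteq> I \<Longrightarrow> prod_list xs \<in> ideal_pow S I M"
  unfolding ideal_pow_def by (rule subsetD[OF gen_ideal_generators]) blast

lemma prod_power_mem_ideal_pow:
  fixes g :: "nat \<Rightarrow> ('k::field) mpoly"
  assumes "finite A" and "g ` A \<subseteq> I"
  shows "(\<Prod>v\<in>A. g v ^ s) \<in> ideal_pow S I (s * card A)"
proof -
  have "\<exists>xs. length xs = s * card A \<and> set xs \<subseteq> g ` A \<and> prod_list xs = (\<Prod>v\<in>A. g v ^ s)"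
    using assms(1)
  proof (induction A rule: finite_induct)
    case (insert x F)
    then obtain xs where "length xs = s * card F" "set xs \<subseteq> g ` F" "prod_list xs = (\<Prod>v\<in>F. g v ^ s)"
      by blast
    with insert show ?case
      by (intro exI[of _ "replicate s (g x) @ xs"]) auto
  qed simp
  then obtain xs where "length xs = s * card A" "set xs \<subseteq> g ` A" "prod_list xs = (\<Prod>v\<in>A. g v ^ s)"
    by blast
  with assms(2) show ?thesis
    using prod_list_mem_ideal_pow[of xs _ I S] by auto
qed

definition monomial_set :: "nat \<Rightarrow> ((nat \<Rightarrow>\<^sub>0 nat) \<Rightarrow> bool) \<Rightarrow> ('k::field) mpoly set" where
  "monomial_set N Q = {p \<in> polyring N. \<forall>m\<in>Poly_Mapping.keys p. Q m}"

lemma monomial_set_is_ideal: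
  assumes "\<And>a b. Q b \<Longrightarrow> Q (a + b)"
  shows "is_ideal (polyring N) (monomial_set N Q)"
  unfolding is_ideal_def monomial_set_def
proof (intro conjI ballI)
  fix p q :: "'a mpoly"
  assume "p \<in> {p \<in> polyring N. \<forall>m\<in>Poly_Mapping.keys p. Q m}"
    and "q \<in> {p \<in> polyring N. \<forall>m\<in>Poly_Mapping.keys p. Q m}"
  then show "p + q \<in> {p \<in> polyring N. \<forall>m\<in>Poly_Mapping.keys p. Q m}"
    using keys_add_closed[of p Q q] polyring_add by blast
next
  fix r p :: "'a mpoly"
  assume "r \<in> polyring N" and "p \<in> {p \<in> polyring N. \<forall>m\<in>Poly_Mapping.keys p. Q m}"
  moreover have "\<forall>m\<in>Poly_Mapping.keys (r * p). Q m"
    by (rule keys_mult_closed[of r "\<lambda>_. True" p Q]) (use calculation assms in auto)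
  ultimately show "r * p \<in> {p \<in> polyring N. \<forall>m\<in>Poly_Mapping.keys p. Q m}"
    using polyring_mult by blast
qed (auto simp: polyring_zero)

section \<open>Faces of the bipyramid\<close>

lemma bipyr_face_subset: "bipyr_face n \<tau> \<Longrightarrow> \<sigma> \<subseteq> \<tau> \<Longrightarrow> bipyr_face n \<sigma>"
  unfolding bipyr_face_def by blast

lemma bipyr_face_facet: "F \<in> bipyr_facets n \<Longrightarrow> \<sigma> \<subseteq> F \<Longrightarrow> bipyr_face n \<sigma>"
  unfolding bipyr_face_def by blast

lemma cycle_edgesE:
  assumes "e \<in> cycle_edges n"
  obtains i where "1 \<le> i" "i \<le> n - 1" "e = {i, i + 1}" | "e = {n, 1}"
  using assms unfolding cycle_edges_def by auto

lemma bipyr_facetsE: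
  assumes "F \<in> bipyr_facets n"
  obtains a e where "a = 0 \<or> a = n + 1" "e \<in> cycle_edges n" "F = insert a e"
  using assms unfolding bipyr_facets_def by auto

lemma cycle_edge_props:
  assumes "2 \<le> n" "e \<in> cycle_edges n"
  shows "card e = 2" "e \<subseteq> {1..n}"
  using assms(2) by (cases rule: cycle_edgesE; use assms(1) in auto)+

lemma bipyr_facet_props:
  assumes "2 \<le> n" "F \<in> bipyr_facets n"
  shows "finite F" "card F = 3" "F \<subseteq> {..n + 1}"
proof -
  obtain a e where a: "a = 0 \<or> a = n + 1" and e: "e \<in> cycle_edges n" and F: "F = insert a e"
    using assms(2) by (rule bipyr_facetsE)
  have "card e = 2" "e \<subseteq> {1..n}"
    using cycle_edge_props[OF assms(1) e] by auto
  moreover have "a \<notin> e" and "finite e"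
    using a \<open>e \<subseteq> {1..n}\<close> finite_subset by auto
  ultimately show "finite F" "card F = 3" "F \<subseteq> {..n + 1}"
    using F a by (auto simp: card_insert_disjoint)
qed

text \<open>All facets have three vertices.\<close>

lemma insert_bipyr_facet_not_face:
  assumes "2 \<le> n" "F \<in> bipyr_facets n" "j \<notin> F" "insert j F \<subseteq> \<sigma>"
  shows "\<not> bipyr_face n \<sigma>"
proof
  assume "bipyr_face n \<sigma>"
  then obtain F' where F': "F' \<in> bipyr_facets n" "insert j F \<subseteq> F'"
    using assms(4) unfolding bipyr_face_def by blast
  then have "card (insert j F) \<le> card F'"
    using bipyr_facet_props[OF assms(1)] by (intro card_mono) auto
  then show False
    using bipyr_facet_props[OF assms(1)] F'(1) assms(2,3) by simp
qed

lemma bipyr_facet_odd_vertex: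
  assumes "1 \<le> n" "F \<in> bipyr_facets n"
  obtains c where "c \<in> F" "odd c" "1 \<le> c" "c \<le> n"
proof -
  obtain a e where e: "e \<in> cycle_edges n" and F: "F = insert a e"
    using assms(2) by (rule bipyr_facetsE)
  from e show thesis
  proof (cases rule: cycle_edgesE)
    case (1 i)
    show thesis
    proof (cases "odd i")
      case True
      then show thesis using 1 F by (intro that[of i]) auto
    next
      case False
      then show thesis using 1 F assms(1) by (intro that[of "i + 1"]) auto
    qed
  next
    case 2
    then show thesis
      using F assms(1) by (intro that[of 1]) auto
  qed
qed

lemma odd_pair_not_bipyr_face:
  assumes "even n" "odd v" "odd c" "v \<noteq> c" "1 \<le> v" "v \<le> n" "1 \<le> c" "c \<le> n"
  shows "\<not> bipyr_face n {v, c}"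
proof
  assume "bipyr_face n {v, c}"
  then obtain F where F: "F \<in> bipyr_facets n" "{v, c} \<subseteq> F"
    unfolding bipyr_face_def by blast
  obtain a e where "a = 0 \<or> a = n + 1" "e \<in> cycle_edges n" "F = insert a e"
    using F(1) by (rule bipyr_facetsE)
  with F(2) assms have ve: "{v, c} \<subseteq> e" by auto
  from \<open>e \<in> cycle_edges n\<close> show False
  proof (cases rule: cycle_edgesE)
    case (1 i)
    then show False using ve assms(2-4) by auto
  next
    case 2
    then show False using ve assms by auto
  qed
qed

lemma bipyr_facet_lower: "i < k \<Longrightarrow> {0, 2 * i + 1, 2 * i + 2} \<in> bipyr_facets (2 * k)"
  unfolding bipyr_facets_def cycle_edges_def
  by (rule UnI1, rule CollectI, rule exI[of _ "{2 * i + 1, 2 * i + 2}"]) auto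

lemma bipyr_facet_upper: "i < k \<Longrightarrow> {2 * k + 1, 2 * i + 1, 2 * i + 2} \<in> bipyr_facets (2 * k)"
  unfolding bipyr_facets_def cycle_edges_def
  by (rule UnI2, rule CollectI, rule exI[of _ "{2 * i + 1, 2 * i + 2}"]) auto

section \<open>The Stanley--Reisner ideal as a monomial ideal\<close>

definition nonface_ideal :: "nat \<Rightarrow> ('k::field) mpoly set" where
  "nonface_ideal n = monomial_set (n + 1) (\<lambda>m. \<not> bipyr_face n (Poly_Mapping.keys m))"

lemma nonface_ideal_is_ideal: "is_ideal (polyring (n + 1)) (nonface_ideal n)"
  unfolding nonface_ideal_def
  by (rule monomial_set_is_ideal) (auto simp: keys_add_nat dest: bipyr_face_subset)

lemma SR_ideal_is_ideal: "is_ideal (polyring (n + 1)) (SR_ideal n)"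
  unfolding SR_ideal_def
  by (rule gen_ideal_is_ideal) (auto intro!: polyring_prod polyring_var)

lemma SR_ideal_subset_polyring: "SR_ideal n \<subseteq> polyring (n + 1)"
  using SR_ideal_is_ideal unfolding is_ideal_def by blast

lemma SR_generator: "\<tau> \<subseteq> {0..n + 1} \<Longrightarrow> \<not> bipyr_face n \<tau> \<Longrightarrow> (\<Prod>i\<in>\<tau>. var i) \<in> SR_ideal n"
  unfolding SR_ideal_def by (rule subsetD[OF gen_ideal_generators]) blast

lemma single_mem_SR_ideal:
  assumes "Poly_Mapping.keys m \<subseteq> {..n + 1}" "\<not> bipyr_face n (Poly_Mapping.keys m)"
  shows "Poly_Mapping.single m c \<in> (SR_ideal n :: ('k::field) mpoly set)"
proof -
  let ?g = "mon_of_set (Poly_Mapping.keys m)"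
  have "m = (m - ?g) + ?g"
    by (rule poly_mapping_eqI) (auto simp: lookup_add lookup_minus lookup_mon_of_set in_keys_iff)
  then have "Poly_Mapping.single m c = Poly_Mapping.single (m - ?g) c * Poly_Mapping.single ?g (1 :: 'k)"
    by (simp add: mult_single flip: \<open>m = (m - ?g) + ?g\<close>)
  also have "\<dots> = Poly_Mapping.single (m - ?g) c * (\<Prod>i\<in>Poly_Mapping.keys m. var i)"
    by (simp add: prod_var_eq_single)
  finally have "Poly_Mapping.single m c = Poly_Mapping.single (m - ?g) c * (\<Prod>i\<in>Poly_Mapping.keys m. var i)" .
  moreover have "Poly_Mapping.keys (m - ?g) \<subseteq> Poly_Mapping.keys m"
    by (auto simp: in_keys_iff lookup_minus)
  then have "Poly_Mapping.single (m - ?g) c \<in> (polyring (n + 1) :: 'k mpoly set)"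
    using assms(1) by (intro polyring_single) blast
  moreover have "(\<Prod>i\<in>Poly_Mapping.keys m. var i) \<in> (SR_ideal n :: 'k mpoly set)"
    using assms by (intro SR_generator) auto
  ultimately show ?thesis
    using ideal_mult_closed[OF SR_ideal_is_ideal] by metis
qed

lemma SR_ideal_eq_nonface_ideal: "SR_ideal n = (nonface_ideal n :: ('k::field) mpoly set)"
proof
  show "SR_ideal n \<subseteq> (nonface_ideal n :: 'k mpoly set)"
    unfolding SR_ideal_def
  proof (rule gen_ideal_least[OF nonface_ideal_is_ideal], safe)
    fix \<tau> assume "\<tau> \<subseteq> {0..n + 1}" "\<not> bipyr_face n \<tau>"
    moreover from this have "finite \<tau>" using finite_subset by blast
    ultimately show "(\<Prod>i\<in>\<tau>. var i) \<in> (nonface_ideal n :: 'k mpoly set)"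
      by (auto simp: prod_var_eq_single nonface_ideal_def monomial_set_def keys_mon_of_set intro!: polyring_single)
  qed
next
  show "nonface_ideal n \<subseteq> (SR_ideal n :: 'k mpoly set)"
  proof
    fix p :: "'k mpoly" assume p: "p \<in> nonface_ideal n"
    have "(\<Sum>m\<in>Poly_Mapping.keys p. Poly_Mapping.single m (Poly_Mapping.lookup p m)) \<in> SR_ideal n"
      using p by (intro ideal_sum_closed[OF SR_ideal_is_ideal] single_mem_SR_ideal)
        (auto simp: nonface_ideal_def monomial_set_def polyring_def)
    then show "p \<in> SR_ideal n"
      by (subst poly_mapping_sum_single)
  qed
qed

section \<open>The facet primes\<close>

definition deg_outside :: "nat \<Rightarrow> nat set \<Rightarrow> (nat \<Rightarrow>\<^sub>0 nat) \<Rightarrow> nat" where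
  "deg_outside N F m = (\<Sum>j\<in>{..N} - F. Poly_Mapping.lookup m j)"

text \<open>\<open>outside_ideal N F M\<close> is the \<open>M\<close>-th power of the monomial prime \<open>P\<^sub>F = (x\<^sub>j : j \<le> N, j \<notin> F)\<close>.\<close>

definition outside_ideal :: "nat \<Rightarrow> nat set \<Rightarrow> nat \<Rightarrow> ('k::field) mpoly set" where
  "outside_ideal N F M = monomial_set N (\<lambda>m. M \<le> deg_outside N F m)"

lemma deg_outside_add: "deg_outside N F (a + b) = deg_outside N F a + deg_outside N F b"
  by (simp add: deg_outside_def lookup_add sum.distrib)

lemma deg_outside_eq_0_iff:
  "Poly_Mapping.keys m \<subseteq> {..N} \<Longrightarrow> deg_outside N F m = 0 \<longleftrightarrow> Poly_Mapping.keys m \<subseteq> F"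
  by (auto simp: deg_outside_def in_keys_iff)

lemma deg_outside_plus_sum:
  "F \<subseteq> {..N} \<Longrightarrow> deg_outside N F m + (\<Sum>j\<in>F. Poly_Mapping.lookup m j) = (\<Sum>j\<le>N. Poly_Mapping.lookup m j)"
  unfolding deg_outside_def by (simp add: sum.subset_diff[of F "{..N}"])

lemma outside_ideal_is_ideal: "is_ideal (polyring N) (outside_ideal N F M)"
  unfolding outside_ideal_def by (rule monomial_set_is_ideal) (simp add: deg_outside_add)

lemma outside_ideal_mult:
  assumes "a \<in> outside_ideal N F i" "b \<in> outside_ideal N F j"
  shows "a * b \<in> outside_ideal N F (i + j)"
proof -
  have "\<forall>m\<in>Poly_Mapping.keys (a * b). i + j \<le> deg_outside N F m"
    by (rule keys_mult_closed[of a "\<lambda>m. i \<le> deg_outside N F m" b "\<lambda>m. j \<le> deg_outside N F m"])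
      (use assms in \<open>auto simp: outside_ideal_def monomial_set_def deg_outside_add\<close>)
  with assms show ?thesis
    by (auto simp: outside_ideal_def monomial_set_def intro: polyring_mult)
qed

lemma not_mem_outside_ideal_1:
  "a \<in> polyring N \<Longrightarrow> a \<notin> outside_ideal N F 1 \<Longrightarrow> \<exists>m\<in>Poly_Mapping.keys a. deg_outside N F m = 0"
  by (auto simp: outside_ideal_def monomial_set_def Suc_le_eq)

lemma outside_ideal_1_prime:
  assumes "a \<in> polyring N" "b \<in> polyring N" "a * b \<in> outside_ideal N F 1"
  shows "a \<in> outside_ideal N F 1 \<or> b \<in> outside_ideal N F 1"
proof (rule ccontr)
  assume "\<not> ?thesis"
  then have "\<exists>m\<in>Poly_Mapping.keys a. deg_outside N F m = 0" "\<exists>m\<in>Poly_Mapping.keys b. deg_outside N F m = 0"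
    using not_mem_outside_ideal_1 assms by blast+
  then have "\<exists>m\<in>Poly_Mapping.keys (a * b). deg_outside N F m = 0 + 0"
    by (intro keys_mult_min_weight[where w = "deg_outside N F"]) (auto simp: deg_outside_add)
  then show False
    using assms(3) by (auto simp: outside_ideal_def monomial_set_def)
qed

lemma prime_ideal_outside_ideal_1: "prime_ideal (polyring N) (outside_ideal N F 1)"
proof -
  have "1 \<notin> outside_ideal N F 1"
    by (simp add: outside_ideal_def monomial_set_def deg_outside_def)
  then show ?thesis
    unfolding prime_ideal_def using outside_ideal_is_ideal outside_ideal_1_prime polyring_one by blast
qed

lemma nonface_ideal_subset_outside_ideal:
  assumes "F \<in> bipyr_facets n"
  shows "nonface_ideal n \<subseteq> outside_ideal (n + 1) F 1"
proof
  fix p assume p: "p \<in> nonface_ideal n"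
  have "deg_outside (n + 1) F m \<noteq> 0" if "m \<in> Poly_Mapping.keys p" for m
  proof
    assume "deg_outside (n + 1) F m = 0"
    moreover have "Poly_Mapping.keys m \<subseteq> {..n + 1}"
      using p that by (auto simp: nonface_ideal_def monomial_set_def polyring_def)
    ultimately have "bipyr_face n (Poly_Mapping.keys m)"
      by (intro bipyr_face_facet[OF assms]) (simp add: deg_outside_eq_0_iff)
    with p that show False
      by (auto simp: nonface_ideal_def monomial_set_def)
  qed
  with p show "p \<in> outside_ideal (n + 1) F 1"
    by (auto simp: nonface_ideal_def outside_ideal_def monomial_set_def Suc_le_eq)
qed

lemma mult_facet_mem_nonface_ideal:
  assumes n: "2 \<le> n" and F: "F \<in> bipyr_facets n" and p: "p \<in> outside_ideal (n + 1) F 1"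
  shows "p * Poly_Mapping.single (mon_of_set F) 1 \<in> nonface_ideal n"
proof -
  let ?x = "Poly_Mapping.single (mon_of_set F) 1"
  have fF: "finite F" and sF: "F \<subseteq> {..n + 1}"
    using bipyr_facet_props[OF n F] by auto
  have pk: "\<forall>m\<in>Poly_Mapping.keys p. Poly_Mapping.keys m \<subseteq> {..n + 1} \<and> 1 \<le> deg_outside (n + 1) F m"
    using p by (auto simp: outside_ideal_def monomial_set_def polyring_def)
  have "\<forall>m\<in>Poly_Mapping.keys (p * ?x). \<not> bipyr_face n (Poly_Mapping.keys m)"
  proof (rule keys_mult_closed[OF pk, where B = "\<lambda>m. m = mon_of_set F"])
    show "\<forall>m\<in>Poly_Mapping.keys ?x. m = mon_of_set F"
      by simp
  next
    fix a b assume a: "Poly_Mapping.keys a \<subseteq> {..n + 1} \<and> 1 \<le> deg_outside (n + 1) F a"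
      and b: "b = mon_of_set F"
    obtain j where "j \<in> Poly_Mapping.keys a" "j \<notin> F"
      using a deg_outside_eq_0_iff[of a "n + 1" F] by fastforce
    then show "\<not> bipyr_face n (Poly_Mapping.keys (a + b))"
      using fF b by (intro insert_bipyr_facet_not_face[OF n F]) (auto simp: keys_add_nat keys_mon_of_set)
  qed
  moreover have "p * ?x \<in> polyring (n + 1)"
    using p fF sF by (intro polyring_mult polyring_single_mon_of_set) (auto simp: outside_ideal_def monomial_set_def)
  ultimately show ?thesis
    by (simp add: nonface_ideal_def monomial_set_def)
qed

lemma mem_outside_ideal_if_mult_facet_mem_nonface_ideal:
  assumes n: "2 \<le> n" and F: "F \<in> bipyr_facets n" and p: "p \<in> polyring (n + 1)"
    and px: "p * Poly_Mapping.single (mon_of_set F) 1 \<in> nonface_ideal n"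
  shows "p \<in> outside_ideal (n + 1) F 1"
proof (rule ccontr)
  let ?x = "Poly_Mapping.single (mon_of_set F) 1"
  assume "p \<notin> outside_ideal (n + 1) F 1"
  moreover have "deg_outside (n + 1) F (mon_of_set F) = 0"
    using bipyr_facet_props[OF n F] by (simp add: keys_mon_of_set deg_outside_eq_0_iff)
  ultimately have "\<exists>m\<in>Poly_Mapping.keys (p * ?x). deg_outside (n + 1) F m = 0 + 0"
    using not_mem_outside_ideal_1[OF p]
    by (intro keys_mult_min_weight[where w = "deg_outside (n + 1) F"]) (auto simp: deg_outside_add)
  then obtain m where m: "m \<in> Poly_Mapping.keys (p * ?x)" "deg_outside (n + 1) F m = 0"
    by auto
  have "Poly_Mapping.keys m \<subseteq> {..n + 1}"
    using m(1) px by (auto simp: nonface_ideal_def monomial_set_def polyring_def)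
  with m(2) have "bipyr_face n (Poly_Mapping.keys m)"
    by (intro bipyr_face_facet[OF F]) (simp add: deg_outside_eq_0_iff)
  with m(1) px show False
    by (auto simp: nonface_ideal_def monomial_set_def)
qed

lemma outside_ideal_eq_colon:
  assumes "2 \<le> n" "F \<in> bipyr_facets n"
  shows "outside_ideal (n + 1) F 1 = colon (polyring (n + 1)) (SR_ideal n) (Poly_Mapping.single (mon_of_set F) 1)"
  unfolding colon_def SR_ideal_eq_nonface_ideal
  using mult_facet_mem_nonface_ideal[OF assms] mem_outside_ideal_if_mult_facet_mem_nonface_ideal[OF assms]
  by (auto simp: outside_ideal_def monomial_set_def)

lemma outside_ideal_mem_Ass:
  assumes "2 \<le> n" "F \<in> bipyr_facets n"
  shows "outside_ideal (n + 1) F 1 \<in> Ass (polyring (n + 1)) (SR_ideal n)"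
proof -
  have "Poly_Mapping.single (mon_of_set F) 1 \<in> polyring (n + 1)"
    using bipyr_facet_props[OF assms] by (intro polyring_single_mon_of_set)
  then show ?thesis
    unfolding Ass_def using prime_ideal_outside_ideal_1 outside_ideal_eq_colon[OF assms] by blast
qed

lemma Ass_subset_outside_ideal:
  assumes P: "P \<in> Ass (polyring (n + 1)) (SR_ideal n)"
  obtains F where "F \<in> bipyr_facets n" "P \<subseteq> outside_ideal (n + 1) F 1"
proof -
  obtain g where g: "g \<in> polyring (n + 1)" and P_eq: "P = colon (polyring (n + 1)) (SR_ideal n) g"
    and "prime_ideal (polyring (n + 1)) P"
    using P unfolding Ass_def by blast
  then have "P \<noteq> polyring (n + 1)"
    by (simp add: prime_ideal_def)
  then have "g \<notin> nonface_ideal n"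
    using ideal_mult_closed[OF nonface_ideal_is_ideal]
    unfolding P_eq colon_def SR_ideal_eq_nonface_ideal by auto
  then obtain m where m: "m \<in> Poly_Mapping.keys g" "bipyr_face n (Poly_Mapping.keys m)"
    using g by (auto simp: nonface_ideal_def monomial_set_def)
  then obtain F where F: "F \<in> bipyr_facets n" "Poly_Mapping.keys m \<subseteq> F"
    unfolding bipyr_face_def by blast
  have "deg_outside (n + 1) F m = 0"
    using F(2) g m(1) by (subst deg_outside_eq_0_iff) (auto simp: polyring_def)
  then have g_notin: "g \<notin> outside_ideal (n + 1) F 1"
    using m(1) by (auto simp: outside_ideal_def monomial_set_def Suc_le_eq)
  have "P \<subseteq> outside_ideal (n + 1) F 1"
  proof
    fix h assume "h \<in> P"
    then have "h \<in> polyring (n + 1)" "h * g \<in> outside_ideal (n + 1) F 1"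
      using nonface_ideal_subset_outside_ideal[OF F(1)]
      unfolding P_eq colon_def SR_ideal_eq_nonface_ideal by auto
    then show "h \<in> outside_ideal (n + 1) F 1"
      using outside_ideal_1_prime g g_notin by blast
  qed
  with F(1) show thesis by (rule that)
qed

section \<open>Lower bound\<close>

lemma ideal_pow_SR_subset_outside_ideal:
  assumes "F \<in> bipyr_facets n"
  shows "ideal_pow (polyring (n + 1)) (SR_ideal n) M \<subseteq> outside_ideal (n + 1) F M"
proof -
  have "prod_list xs \<in> outside_ideal (n + 1) F (length xs)" if "set xs \<subseteq> SR_ideal n" for xs
    using that
  proof (induction xs)
    case Nil
    then show ?case by (simp add: outside_ideal_def monomial_set_def polyring_one)
  next
    case (Cons x xs)
    then have "x \<in> outside_ideal (n + 1) F 1"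
      using nonface_ideal_subset_outside_ideal[OF assms] SR_ideal_eq_nonface_ideal by auto
    from outside_ideal_mult[OF this Cons.IH] Cons.prems show ?case
      by simp
  qed
  then show ?thesis
    unfolding ideal_pow_def by (intro gen_ideal_least[OF outside_ideal_is_ideal]) blast
qed

lemma symbolic_power_deg_outside:
  assumes n: "2 \<le> n" and F: "F \<in> bipyr_facets n"
    and f: "f \<in> symbolic_power (polyring (n + 1)) (SR_ideal n) M"
    and m: "m \<in> Poly_Mapping.keys f"
  shows "M \<le> deg_outside (n + 1) F m"
proof -
  obtain u where u: "u \<in> polyring (n + 1)" "u \<notin> outside_ideal (n + 1) F 1"
    and uf: "u * f \<in> ideal_pow (polyring (n + 1)) (SR_ideal n) M"
    using f outside_ideal_mem_Ass[OF n F] unfolding symbolic_power_def by blast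
  define a where "a = Min (deg_outside (n + 1) F ` Poly_Mapping.keys f)"
  have a_le: "\<forall>m\<in>Poly_Mapping.keys f. a \<le> deg_outside (n + 1) F m"
    unfolding a_def by simp
  have "a \<in> deg_outside (n + 1) F ` Poly_Mapping.keys f"
    unfolding a_def using m by (intro Min_in) auto
  then have "\<exists>m\<in>Poly_Mapping.keys f. deg_outside (n + 1) F m = a"
    by auto
  then have "\<exists>m\<in>Poly_Mapping.keys (u * f). deg_outside (n + 1) F m = 0 + a"
    using not_mem_outside_ideal_1[OF u] a_le
    by (intro keys_mult_min_weight[where w = "deg_outside (n + 1) F"]) (auto simp: deg_outside_add)
  moreover have "u * f \<in> outside_ideal (n + 1) F M"
    using uf ideal_pow_SR_subset_outside_ideal[OF F] by blast
  ultimately have "M \<le> a"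
    by (auto simp: outside_ideal_def monomial_set_def)
  then show ?thesis
    using a_le m by auto
qed

lemma sum_pairs_eq_sum_atLeastAtMost:
  fixes g :: "nat \<Rightarrow> 'a::comm_monoid_add"
  shows "(\<Sum>i<k. g (2 * i + 1) + g (2 * i + 2)) = (\<Sum>j\<in>{1..2 * k}. g j)"
proof (induction k)
  case (Suc k)
  have "{1..2 * Suc k} = insert (2 * k + 2) (insert (2 * k + 1) {1..2 * k})" by auto
  with Suc show ?case by (simp add: ac_simps)
qed simp

lemma facet_pair_degree_bound:
  assumes bound: "\<And>F. F \<in> bipyr_facets (2 * k) \<Longrightarrow> M \<le> deg_outside (2 * k + 1) F m" and i: "i < k"
  shows "2 * M + Poly_Mapping.lookup m 0 + Poly_Mapping.lookup m (2 * k + 1)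
      + 2 * (Poly_Mapping.lookup m (2 * i + 1) + Poly_Mapping.lookup m (2 * i + 2))
    \<le> 2 * (\<Sum>j\<le>2 * k + 1. Poly_Mapping.lookup m j)"
proof -
  let ?l = "Poly_Mapping.lookup m" and ?t = "\<Sum>j\<le>2 * k + 1. Poly_Mapping.lookup m j"
  have facet: "M + (?l a + ?l (2 * i + 1) + ?l (2 * i + 2)) \<le> ?t" if "a = 0 \<or> a = 2 * k + 1" for a
  proof -
    have "{a, 2 * i + 1, 2 * i + 2} \<in> bipyr_facets (2 * k)"
      using i that bipyr_facet_lower bipyr_facet_upper by blast
    then have "M \<le> deg_outside (2 * k + 1) {a, 2 * i + 1, 2 * i + 2} m"
      by (rule bound)
    moreover have "deg_outside (2 * k + 1) {a, 2 * i + 1, 2 * i + 2} m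
        + (?l a + ?l (2 * i + 1) + ?l (2 * i + 2)) = ?t"
      using deg_outside_plus_sum[of "{a, 2 * i + 1, 2 * i + 2}" "2 * k + 1" m] i that by auto
    ultimately show ?thesis
      by linarith
  qed
  from facet[of 0] facet[of "2 * k + 1"] show ?thesis
    unfolding mult_2 by linarith
qed

lemma facet_degree_bounds_total_degree:
  assumes k: "2 \<le> k"
    and bound: "\<And>F. F \<in> bipyr_facets (2 * k) \<Longrightarrow> s * (k - 1) \<le> deg_outside (2 * k + 1) F m"
  shows "s * k \<le> (\<Sum>j\<le>2 * k + 1. Poly_Mapping.lookup m j)"
proof -
  let ?l = "Poly_Mapping.lookup m" and ?M = "s * (k - 1)"
  let ?t = "\<Sum>j\<le>2 * k + 1. ?l j" and ?T = "\<Sum>j\<in>{1..2 * k}. ?l j"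
  define p where "p i = ?l (2 * i + 1) + ?l (2 * i + 2)" for i
  define c where "c = 2 * ?M + ?l 0 + ?l (2 * k + 1)"
  have "(\<Sum>i<k. c + 2 * p i) \<le> (\<Sum>i<k. 2 * ?t)"
    using facet_pair_degree_bound[OF bound] unfolding c_def p_def by (intro sum_mono) auto
  moreover have "(\<Sum>i<k. p i) = ?T"
    unfolding p_def by (rule sum_pairs_eq_sum_atLeastAtMost)
  then have "(\<Sum>i<k. c + 2 * p i) = k * c + 2 * ?T"
    by (simp add: sum.distrib flip: sum_distrib_left)
  ultimately have "k * c + 2 * ?T \<le> k * (2 * ?t)"
    by simp
  moreover have "{..2 * k + 1} = insert 0 (insert (2 * k + 1) {1..2 * k})"
    by auto
  then have "?t = ?l 0 + ?T + ?l (2 * k + 1)"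
    by simp
  moreover have "2 * (?l 0 + ?l (2 * k + 1)) \<le> k * (?l 0 + ?l (2 * k + 1))"
    using k by (rule mult_le_mono1)
  ultimately have "k * ?M + ?t \<le> k * ?t"
    unfolding c_def by (simp add: algebra_simps)
  then have "(k - 1) * (k * s) \<le> (k - 1) * ?t"
    by (simp add: algebra_simps diff_mult_distrib)
  then show ?thesis
    using k by (simp add: mult.commute)
qed

lemma symbolic_power_mon_deg_ge:
  assumes k: "2 \<le> k"
    and f: "f \<in> symbolic_power (polyring (2 * k + 1)) (SR_ideal (2 * k)) (s * (k - 1))"
    and m: "m \<in> Poly_Mapping.keys f"
  shows "s * k \<le> mon_deg m"
proof -
  have "Poly_Mapping.keys m \<subseteq> {..2 * k + 1}"
    using f m by (auto simp: symbolic_power_def polyring_def)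
  moreover have "s * k \<le> (\<Sum>j\<le>2 * k + 1. Poly_Mapping.lookup m j)"
    using k f m by (intro facet_degree_bounds_total_degree symbolic_power_deg_outside) auto
  ultimately show ?thesis
    by (simp add: mon_deg_eq_sum_atMost)
qed

section \<open>The witness\<close>

definition odd_vertices :: "nat \<Rightarrow> nat set" where
  "odd_vertices k = (\<lambda>i. 2 * i + 1) ` {..<k}"

lemma mem_odd_vertices_iff: "v \<in> odd_vertices k \<longleftrightarrow> odd v \<and> 1 \<le> v \<and> v \<le> 2 * k"
  by (auto simp: odd_vertices_def elim!: oddE)

lemma finite_odd_vertices: "finite (odd_vertices k)"
  by (simp add: odd_vertices_def)

lemma card_odd_vertices: "card (odd_vertices k) = k"
  unfolding odd_vertices_def by (subst card_image) (auto simp: inj_on_def)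

definition odd_witness :: "nat \<Rightarrow> nat \<Rightarrow> ('k::field) mpoly" where
  "odd_witness k s = (\<Prod>v\<in>odd_vertices k. var v ^ s)"

lemma odd_witness_polyring: "odd_witness k s \<in> polyring (2 * k + 1)"
  unfolding odd_witness_def
  by (intro polyring_prod polyring_power polyring_var) (auto simp: mem_odd_vertices_iff)

lemma odd_witness_homogeneous:
  assumes "1 \<le> s"
  shows "odd_witness k s \<noteq> 0" "homogeneous_of (s * k) (odd_witness k s)"
proof -
  let ?e = "\<Sum>v\<in>odd_vertices k. Poly_Mapping.single v s"
  have w: "odd_witness k s = Poly_Mapping.single ?e 1"
    unfolding odd_witness_def var_power by (rule prod_single[OF finite_odd_vertices])
  show "odd_witness k s \<noteq> 0"
    by (simp add: w flip: keys_eq_empty)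
  have l: "Poly_Mapping.lookup ?e j = (if j \<in> odd_vertices k then s else 0)" for j
    using finite_odd_vertices by (simp add: lookup_sum lookup_single when_def)
  then have "Poly_Mapping.keys ?e = odd_vertices k"
    using assms by (auto simp: in_keys_iff split: if_splits)
  then have "mon_deg ?e = s * k"
    unfolding mon_deg_def by (simp add: l card_odd_vertices)
  then show "homogeneous_of (s * k) (odd_witness k s)"
    by (simp add: homogeneous_of_def w)
qed

lemma odd_pair_mem_SR_ideal:
  assumes "v \<in> odd_vertices k" "c \<in> odd_vertices k" "v \<noteq> c"
  shows "(var v * var c :: ('k::field) mpoly) \<in> SR_ideal (2 * k)"
proof -
  have "(\<Prod>i\<in>{v, c}. var i) \<in> (SR_ideal (2 * k) :: 'k mpoly set)"
    using assms by (intro SR_generator odd_pair_not_bipyr_face) (auto simp: mem_odd_vertices_iff)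
  then show ?thesis
    using assms(3) by simp
qed

lemma power_var_mult_odd_witness:
  assumes "c \<in> odd_vertices k"
  shows "var c ^ (s * (k - 1)) * odd_witness k s
    = var c ^ s * (\<Prod>v\<in>odd_vertices k - {c}. (var v * var c) ^ s :: ('k::field) mpoly)"
proof -
  have "card (odd_vertices k - {c}) = k - 1"
    using assms finite_odd_vertices by (simp add: card_odd_vertices)
  then have "(\<Prod>v\<in>odd_vertices k - {c}. (var v * var c) ^ s)
      = (\<Prod>v\<in>odd_vertices k - {c}. var v ^ s) * (var c ^ (s * (k - 1)) :: 'k mpoly)"
    by (simp add: power_mult_distrib prod.distrib power_mult mult.commute)
  moreover have "odd_witness k s = var c ^ s * (\<Prod>v\<in>odd_vertices k - {c}. var v ^ s :: 'k mpoly)"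
    unfolding odd_witness_def using finite_odd_vertices assms by (rule prod.remove)
  ultimately show ?thesis
    by (simp add: ac_simps)
qed

lemma odd_witness_mem_symbolic_power:
  assumes k: "2 \<le> k"
  shows "(odd_witness k s :: ('k::field) mpoly)
    \<in> symbolic_power (polyring (2 * k + 1)) (SR_ideal (2 * k)) (s * (k - 1))"
  unfolding symbolic_power_def
proof (intro CollectI conjI ballI odd_witness_polyring)
  let ?R = "polyring (2 * k + 1) :: 'k mpoly set" and ?M = "s * (k - 1)"
  fix P assume "P \<in> Ass ?R (SR_ideal (2 * k))"
  then obtain F where F: "F \<in> bipyr_facets (2 * k)" "P \<subseteq> outside_ideal (2 * k + 1) F 1"
    by (rule Ass_subset_outside_ideal)
  obtain c where c: "c \<in> F" "odd c" "1 \<le> c" "c \<le> 2 * k"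
  proof (rule bipyr_facet_odd_vertex[OF _ F(1)])
    show "1 \<le> 2 * k" using k by simp
  qed
  then have c_odd: "c \<in> odd_vertices k"
    by (simp add: mem_odd_vertices_iff)
  have "var c \<in> ?R"
    using c by (intro polyring_var) simp
  then have u: "var c ^ ?M \<in> ?R" and vc: "var c ^ s \<in> ?R"
    by (rule polyring_power)+
  have "deg_outside (2 * k + 1) F (Poly_Mapping.single c ?M) = 0"
    using c by (subst deg_outside_eq_0_iff) auto
  then have "var c ^ ?M \<notin> P"
    using F(2) by (auto simp: outside_ideal_def monomial_set_def var_power)
  have "(\<lambda>v. var v * var c :: 'k mpoly) ` (odd_vertices k - {c}) \<subseteq> SR_ideal (2 * k)"
    using odd_pair_mem_SR_ideal[OF _ c_odd] by blast
  from prod_power_mem_ideal_pow[OF _ this, of s ?R] c_odd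
  have "(\<Prod>v\<in>odd_vertices k - {c}. (var v * var c) ^ s) \<in> ideal_pow ?R (SR_ideal (2 * k)) ?M"
    by (simp add: finite_odd_vertices card_odd_vertices)
  then have "var c ^ ?M * odd_witness k s \<in> ideal_pow ?R (SR_ideal (2 * k)) ?M"
    unfolding power_var_mult_odd_witness[OF c_odd]
    by (rule ideal_mult_closed[OF ideal_pow_is_ideal[OF SR_ideal_subset_polyring] vc])
  with u \<open>var c ^ ?M \<notin> P\<close> show "\<exists>u\<in>?R - P. u * odd_witness k s \<in> ideal_pow ?R (SR_ideal (2 * k)) ?M"
    by blast
qed

theorem proposition3p12:
  fixes k s :: nat
  assumes "k \<ge> 2" and "s \<ge> 1"
  shows "alpha (symbolic_power (polyring (2 * k + 1))
            (SR_ideal (2 * k) :: ('k::field) mpoly set) (s * (k - 1))) = s * k"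
  unfolding alpha_def
proof (rule Least_equality)
  show "\<exists>f\<in>symbolic_power (polyring (2 * k + 1)) (SR_ideal (2 * k) :: 'k mpoly set) (s * (k - 1)).
          f \<noteq> 0 \<and> homogeneous_of (s * k) f"
    using odd_witness_mem_symbolic_power[OF assms(1)] odd_witness_homogeneous[OF assms(2)] by blast
next
  fix t
  assume "\<exists>f\<in>symbolic_power (polyring (2 * k + 1)) (SR_ideal (2 * k) :: 'k mpoly set) (s * (k - 1)).
          f \<noteq> 0 \<and> homogeneous_of t f"
  then obtain f m where f: "f \<in> symbolic_power (polyring (2 * k + 1)) (SR_ideal (2 * k) :: 'k mpoly set) (s * (k - 1))"
    and m: "m \<in> Poly_Mapping.keys f" and "mon_deg m = t"
    by (auto simp: homogeneous_of_def simp flip: keys_eq_empty)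
  with symbolic_power_mon_deg_ge[OF assms(1) f m] show "s * k \<le> t"
    by simp
qed

end
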